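(* Let $G=(V,w,m)$ be a finite connected weighted graph satisfying $CD(K,\infty)$ for some $K>0$, let $0=\lambda_0<\lambda_1\le\lambda_2\le\dots$ be the eigenvalues of $-\Delta$ counted with multiplicity, let $x\in V$ and suppose $\lambda_{\deg(x)}=K$. Let $f:V\to\mathbb R$ satisfy $\Delta f(x)=-Kf(x)$ at the point $x$. Then there is $\varphi:V\to\mathbb R$ with $-\Delta\varphi=K\varphi$ on $V$ and $\varphi=f$ on $B_1(x)$.
   Context: A weighted graph is $G=(V,w,m)$ with $V$ countable, $w:V\times V\to[0,\infty)$ symmetric with $w(x,x)=0$, $m:V\to(0,\infty)$; $x\sim y$ iff $w(x,y)>0$. Laplacian $\Delta f(x)=\frac1{m(x)}\sum_yw(x,y)(f(y)-f(x))$, self-adjoint on $\ell^2(V,m)$. $\deg(x)=\#\{y:y\sim x\}$. $B_1(x)=\{x\}\cup\{y:y\sim x\}$. $2\Gamma(f,g)=\Delta(fg)-f\Delta g-g\Delta f$, $2\Gamma_2(f,g)=\Delta\Gamma(f,g)-\Gamma(f,\Delta g)-\Gamma(g,\Delta f)$, $\Gamma f=\Gamma(f,f)$, $\Gamma_2f=\Gamma_2(f,f)$; $CD(K,\infty)$ means $\Gamma_2f(y)\ge K\Gamma f(y)$ for all $f$ and $y$. *)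

theory Defs
  imports "HOL-Analysis.Analysis" "HOL-Library.Multiset"
begin

definition weighted_graph :: "('v \<Rightarrow> 'v \<Rightarrow> real) \<Rightarrow> ('v \<Rightarrow> real) \<Rightarrow> bool" where
  "weighted_graph w m \<longleftrightarrow>
     (\<forall>x y. w x y \<ge> 0) \<and> (\<forall>x y. w x y = w y x) \<and> (\<forall>x. w x x = 0) \<and> (\<forall>x. m x > 0)"

definition adj :: "('v \<Rightarrow> 'v \<Rightarrow> real) \<Rightarrow> 'v \<Rightarrow> 'v \<Rightarrow> bool" where
  "adj w x y \<longleftrightarrow> w x y > 0"

definition connected_graph :: "('v \<Rightarrow> 'v \<Rightarrow> real) \<Rightarrow> bool" where
  "connected_graph w \<longleftrightarrow> (\<forall>x y. (adj w)\<^sup>*\<^sup>* x y)"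

definition deg :: "('v::finite \<Rightarrow> 'v \<Rightarrow> real) \<Rightarrow> 'v \<Rightarrow> nat" where
  "deg w x = card {y. adj w y x}"

definition ball1 :: "('v \<Rightarrow> 'v \<Rightarrow> real) \<Rightarrow> 'v \<Rightarrow> 'v set" where
  "ball1 w x = {x} \<union> {y. adj w y x}"

definition Lap :: "('v::finite \<Rightarrow> 'v \<Rightarrow> real) \<Rightarrow> ('v \<Rightarrow> real) \<Rightarrow> ('v \<Rightarrow> real) \<Rightarrow> 'v \<Rightarrow> real" where
  "Lap w m f x = (1 / m x) * (\<Sum>y\<in>UNIV. w x y * (f y - f x))"

definition Gam :: "('v::finite \<Rightarrow> 'v \<Rightarrow> real) \<Rightarrow> ('v \<Rightarrow> real) \<Rightarrow> ('v \<Rightarrow> real) \<Rightarrow> ('v \<Rightarrow> real) \<Rightarrow> 'v \<Rightarrow> real" where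
  "Gam w m f g x = (Lap w m (\<lambda>z. f z * g z) x - f x * Lap w m g x - g x * Lap w m f x) / 2"

definition Gam2 :: "('v::finite \<Rightarrow> 'v \<Rightarrow> real) \<Rightarrow> ('v \<Rightarrow> real) \<Rightarrow> ('v \<Rightarrow> real) \<Rightarrow> ('v \<Rightarrow> real) \<Rightarrow> 'v \<Rightarrow> real" where
  "Gam2 w m f g x = (Lap w m (Gam w m f g) x - Gam w m f (Lap w m g) x - Gam w m g (Lap w m f) x) / 2"

definition CD_inf :: "('v::finite \<Rightarrow> 'v \<Rightarrow> real) \<Rightarrow> ('v \<Rightarrow> real) \<Rightarrow> real \<Rightarrow> bool" where
  "CD_inf w m K \<longleftrightarrow> (\<forall>f y. Gam2 w m f f y \<ge> K * Gam w m f f y)"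

definition eigspace :: "('v::finite \<Rightarrow> 'v \<Rightarrow> real) \<Rightarrow> ('v \<Rightarrow> real) \<Rightarrow> real \<Rightarrow> (real^'v) set" where
  "eigspace w m \<mu> = {v. \<forall>x. - Lap w m (vec_nth v) x = \<mu> * v $ x}"

definition is_eigenvalue :: "('v::finite \<Rightarrow> 'v \<Rightarrow> real) \<Rightarrow> ('v \<Rightarrow> real) \<Rightarrow> real \<Rightarrow> bool" where
  "is_eigenvalue w m \<mu> \<longleftrightarrow> (\<exists>f. f \<noteq> (\<lambda>_. 0) \<and> (\<forall>x. - Lap w m f x = \<mu> * f x))"

text \<open>Multiset of eigenvalues of -Lap, each repeated according to its multiplicity
  (dimension of the eigenspace; -Lap is self-adjoint on l^2(V,m)).\<close>
definition eig_mset :: "('v::finite \<Rightarrow> 'v \<Rightarrow> real) \<Rightarrow> ('v \<Rightarrow> real) \<Rightarrow> real multiset" where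
  "eig_mset w m = (\<Sum>\<mu>\<in>{\<mu>. is_eigenvalue w m \<mu>}. replicate_mset (dim (eigspace w m \<mu>)) \<mu>)"

definition eigval :: "('v::finite \<Rightarrow> 'v \<Rightarrow> real) \<Rightarrow> ('v \<Rightarrow> real) \<Rightarrow> nat \<Rightarrow> real" where
  "eigval w m k = sorted_list_of_multiset (eig_mset w m) ! k"

end

(*
  Lichnerowicz's argument shows that CD(K,\<infinity>) forces every nonzero eigenvalue of -\<Delta> to be at
  least K. Since connectedness makes 0 a simple eigenvalue, the hypothesis \<lambda>_deg(x) = K says that the
  K-eigenspace has dimension at least deg(x).

  For a K-eigenfunction \<phi>, the curvature condition reads \<Delta>\<Gamma>\<phi> \<ge> 0, so \<Gamma>\<phi> is subharmonic on a
  finite connected graph and hence constant. If \<phi> vanishes on B_1(x) then \<Gamma>\<phi>(x) = 0, so \<Gamma>\<phi> = 0 and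
  \<phi> is constant, i.e. \<phi> = 0. Thus restriction to B_1(x) is injective on the K-eigenspace, and it lands
  in the space of functions on B_1(x) satisfying the eigen-equation at x. That space has dimension at
  most deg(x): it is cut out of a (deg(x)+1)-dimensional space by one nontrivial linear condition.
  Hence restriction is onto this space, which contains the restriction of f.
*)

theory Submission
  imports Defs
begin

section \<open>Calculus on weighted graphs\<close>

lemma
  assumes "weighted_graph w m"
  shows weight_nonneg: "w x y \<ge> 0"
    and weight_sym: "w x y = w y x"
    and weight_diag: "w x x = 0"
    and mass_pos: "m x > 0"
  using assms unfolding weighted_graph_def by auto

lemma Lap_add: "Lap w m (\<lambda>y. f y + g y) x = Lap w m f x + Lap w m g x"
proof -
  have "(\<Sum>y\<in>UNIV. w x y * (f y + g y - (f x + g x)))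
      = (\<Sum>y\<in>UNIV. w x y * (f y - f x)) + (\<Sum>y\<in>UNIV. w x y * (g y - g x))"
    by (simp add: sum.distrib[symmetric] algebra_simps)
  then show ?thesis unfolding Lap_def by (simp add: distrib_left)
qed

lemma Lap_cmult: "Lap w m (\<lambda>y. c * f y) x = c * Lap w m f x"
  unfolding Lap_def by (simp add: sum_distrib_left algebra_simps)

lemma Lap_cong_ball1:
  assumes G: "weighted_graph w m" and eq: "\<forall>y\<in>ball1 w x. f y = g y"
  shows "Lap w m f x = Lap w m g x"
proof -
  have "w x y * (f y - f x) = w x y * (g y - g x)" for y
  proof (cases "w x y > 0")
    case True
    then have "y \<in> ball1 w x" "x \<in> ball1 w x"
      unfolding ball1_def adj_def using weight_sym[OF G] by auto
    then show ?thesis using eq by simp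
  next
    case False
    then show ?thesis using weight_nonneg[OF G, of x y] by simp
  qed
  then show ?thesis unfolding Lap_def by (metis (no_types, lifting) sum.cong)
qed

lemma card_ball1: "weighted_graph w m \<Longrightarrow> card (ball1 w x) = Suc (deg w x)"
  unfolding ball1_def deg_def adj_def by (simp add: weight_diag)

lemma deg_less_card:
  fixes w :: "'v::finite \<Rightarrow> 'v \<Rightarrow> real"
  assumes G: "weighted_graph w m"
  shows "deg w x < CARD('v)"
  using card_ball1[OF G, of x] card_mono[of UNIV "ball1 w x"] by simp

lemma Gam_altdef: "Gam w m f g x = (\<Sum>y\<in>UNIV. w x y * (f y - f x) * (g y - g x)) / (2 * m x)"
proof -
  have "(\<Sum>y\<in>UNIV. w x y * (f y * g y - f x * g x)) - f x * (\<Sum>y\<in>UNIV. w x y * (g y - g x))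
          - g x * (\<Sum>y\<in>UNIV. w x y * (f y - f x))
        = (\<Sum>y\<in>UNIV. w x y * (f y - f x) * (g y - g x))"
    by (simp add: sum_distrib_left sum_subtractf[symmetric] algebra_simps)
  moreover have "(1/M*a - b*(1/M*c) - d*(1/M*e))/2 = (a - b*c - d*e)/(2*M)" for a b c d e M :: real
    by (cases "M = 0") (simp_all add: field_simps)
  ultimately show ?thesis unfolding Gam_def Lap_def by metis
qed

lemma Gam_cmult_right: "Gam w m f (\<lambda>z. c * g z) y = c * Gam w m f g y"
  unfolding Gam_altdef by (simp add: sum_distrib_left algebra_simps)

lemma green_formula:
  assumes G: "weighted_graph w m"
  shows "(\<Sum>y\<in>UNIV. m y * Lap w m f y * g y)
           = - (\<Sum>y\<in>UNIV. \<Sum>z\<in>UNIV. w y z * (f z - f y) * (g z - g y)) / 2"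
proof -
  let ?S = "\<lambda>h. \<Sum>y\<in>UNIV. \<Sum>z\<in>UNIV. w y z * (f z - f y) * h y z"
  have "m y \<noteq> 0" for y using mass_pos[OF G, of y] by simp
  then have lhs: "(\<Sum>y\<in>UNIV. m y * Lap w m f y * g y) = ?S (\<lambda>y z. g y)"
    unfolding Lap_def by (simp add: sum_distrib_right)
  have "?S (\<lambda>y z. g y) = (\<Sum>z\<in>UNIV. \<Sum>y\<in>UNIV. w y z * (f z - f y) * g y)"
    by (rule sum.swap)
  also have "\<dots> = - ?S (\<lambda>y z. g z)"
    by (simp add: sum_negf[symmetric] weight_sym[OF G] algebra_simps)
  finally have swap: "?S (\<lambda>y z. g y) = - ?S (\<lambda>y z. g z)" .
  have "?S (\<lambda>y z. g z - g y) = ?S (\<lambda>y z. g z) - ?S (\<lambda>y z. g y)"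
    by (simp add: sum_subtractf[symmetric] algebra_simps)
  then show ?thesis using lhs swap by linarith
qed

lemma sum_mass_Lap: "weighted_graph w m \<Longrightarrow> (\<Sum>y\<in>UNIV. m y * Lap w m f y) = 0"
  using green_formula[of w m f "\<lambda>_. 1"] by simp

definition energy :: "('v::finite \<Rightarrow> 'v \<Rightarrow> real) \<Rightarrow> ('v \<Rightarrow> real) \<Rightarrow> real" where
  "energy w f = (\<Sum>y\<in>UNIV. \<Sum>z\<in>UNIV. w y z * (f z - f y)\<^sup>2)"

lemma energy_nonneg: "weighted_graph w m \<Longrightarrow> energy w f \<ge> 0"
  unfolding energy_def by (intro sum_nonneg) (simp add: weight_nonneg)

lemma sum_mass_Lap_mult_self:
  "weighted_graph w m \<Longrightarrow> (\<Sum>y\<in>UNIV. m y * Lap w m f y * f y) = - energy w f / 2"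
  using green_formula[of w m f f] unfolding energy_def by (simp add: power2_eq_square mult.assoc)

lemma sum_mass_Gam:
  assumes G: "weighted_graph w m"
  shows "(\<Sum>y\<in>UNIV. m y * Gam w m f f y) = energy w f / 2"
proof -
  have "m y * Gam w m f f y = (\<Sum>z\<in>UNIV. w y z * (f z - f y)\<^sup>2) / 2" for y
    using mass_pos[OF G, of y] unfolding Gam_altdef by (simp add: power2_eq_square mult.assoc)
  then show ?thesis unfolding energy_def by (simp add: sum_divide_distrib)
qed

lemma energy_eq_0_imp_const:
  assumes G: "weighted_graph w m" and C: "connected_graph w" and E: "energy w f = 0"
  shows "f a = f b"
proof -
  have "\<forall>y\<in>UNIV. (\<Sum>z\<in>UNIV. w y z * (f z - f y)\<^sup>2) = 0"
    using E unfolding energy_def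
    by (subst sum_nonneg_eq_0_iff[symmetric]) (auto intro!: sum_nonneg simp: weight_nonneg[OF G])
  then have "w y z * (f z - f y)\<^sup>2 = 0" for y z
    using weight_nonneg[OF G] by (subst (asm) sum_nonneg_eq_0_iff) auto
  then have step: "adj w y z \<Longrightarrow> f y = f z" for y z
    unfolding adj_def by (metis less_irrefl mult_eq_0_iff power_eq_0_iff right_minus_eq)
  have "(adj w)\<^sup>*\<^sup>* a b" using C unfolding connected_graph_def by auto
  then show ?thesis by induct (auto dest: step)
qed

lemma subharmonic_imp_const:
  assumes G: "weighted_graph w m" and C: "connected_graph w" and sub: "\<forall>y. Lap w m g y \<ge> 0"
  shows "g a = g b"
proof -
  have "\<forall>y\<in>UNIV. m y * Lap w m g y = 0"
    using sum_mass_Lap[OF G, of g] sub mass_pos[OF G]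
    by (subst sum_nonneg_eq_0_iff[symmetric]) (auto intro: mult_nonneg_nonneg less_imp_le)
  then have "\<And>y. Lap w m g y = 0" using mass_pos[OF G] by (metis UNIV_I mult_eq_0_iff less_irrefl)
  then have "energy w g = 0" using sum_mass_Lap_mult_self[OF G, of g] by simp
  then show ?thesis by (rule energy_eq_0_imp_const[OF G C])
qed

lemma harmonic_imp_const:
  assumes G: "weighted_graph w m" and C: "connected_graph w" and H: "\<forall>y. Lap w m \<phi> y = 0"
  shows "\<phi> a = \<phi> b"
  by (rule subharmonic_imp_const[OF G C]) (simp add: H)

section \<open>Eigenfunctions under a curvature bound\<close>

lemma sum_mass_sq_pos:
  fixes \<phi> :: "'v::finite \<Rightarrow> real"
  assumes G: "weighted_graph w m" and "\<phi> a \<noteq> 0"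
  shows "(\<Sum>y\<in>UNIV. m y * (\<phi> y)\<^sup>2) > 0"
proof -
  have "m a * (\<phi> a)\<^sup>2 \<le> (\<Sum>y\<in>UNIV. m y * (\<phi> y)\<^sup>2)"
    using member_le_sum[of a UNIV "\<lambda>y. m y * (\<phi> y)\<^sup>2"] mass_pos[OF G] by (simp add: less_imp_le)
  moreover have "m a * (\<phi> a)\<^sup>2 > 0" using assms mass_pos[OF G] by simp
  ultimately show ?thesis by linarith
qed

lemma Lap_eigenfunction:
  "\<forall>y. - Lap w m \<phi> y = \<mu> * \<phi> y \<Longrightarrow> Lap w m \<phi> = (\<lambda>z. - \<mu> * \<phi> z)"
  by (simp add: fun_eq_iff minus_equation_iff)

lemma eigenfunction_energy:
  assumes G: "weighted_graph w m" and E: "\<forall>y. - Lap w m \<phi> y = \<mu> * \<phi> y"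
  shows "\<mu> * (\<Sum>y\<in>UNIV. m y * (\<phi> y)\<^sup>2) = energy w \<phi> / 2"
proof -
  have "(\<Sum>y\<in>UNIV. m y * Lap w m \<phi> y * \<phi> y) = - (\<mu> * (\<Sum>y\<in>UNIV. m y * (\<phi> y)\<^sup>2))"
    unfolding Lap_eigenfunction[OF E]
    by (simp add: sum_distrib_left sum_negf[symmetric] power2_eq_square algebra_simps)
  then show ?thesis using sum_mass_Lap_mult_self[OF G, of \<phi>] by linarith
qed

lemma Gam2_eigenfunction:
  assumes E: "\<forall>y. - Lap w m \<phi> y = \<mu> * \<phi> y"
  shows "Gam2 w m \<phi> \<phi> y = Lap w m (Gam w m \<phi> \<phi>) y / 2 + \<mu> * Gam w m \<phi> \<phi> y"
  unfolding Gam2_def Lap_eigenfunction[OF E] Gam_cmult_right by simp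

text \<open>Integrate \<open>\<Gamma>\<^sub>2 \<phi> \<ge> K \<Gamma> \<phi>\<close> against m: the Laplacian term integrates to 0, leaving
  \<open>K * energy \<le> \<mu> * energy\<close>, and the energy is positive.\<close>

lemma lichnerowicz:
  assumes G: "weighted_graph w m" and CD: "CD_inf w m K"
    and E: "\<forall>y. - Lap w m \<phi> y = \<mu> * \<phi> y" and "\<phi> a \<noteq> 0" and "\<mu> \<noteq> 0"
  shows "K \<le> \<mu>"
proof -
  let ?g = "Gam w m \<phi> \<phi>" and ?N = "\<Sum>y\<in>UNIV. m y * (\<phi> y)\<^sup>2"
  have "K * ?g y \<le> Lap w m ?g y / 2 + \<mu> * ?g y" for y
    using CD Gam2_eigenfunction[OF E, of y] unfolding CD_inf_def by metis
  then have "m y * (K * ?g y) \<le> m y * (Lap w m ?g y / 2 + \<mu> * ?g y)" for y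
    using mass_pos[OF G, of y] by (simp add: mult_left_mono)
  then have "(\<Sum>y\<in>UNIV. m y * (K * ?g y)) \<le> (\<Sum>y\<in>UNIV. m y * (Lap w m ?g y / 2 + \<mu> * ?g y))"
    by (rule sum_mono)
  also have "\<dots> = (\<Sum>y\<in>UNIV. m y * Lap w m ?g y) / 2 + \<mu> * (\<Sum>y\<in>UNIV. m y * ?g y)"
    by (simp add: sum.distrib sum_distrib_left sum_divide_distrib algebra_simps)
  finally have "K * (\<Sum>y\<in>UNIV. m y * ?g y) \<le> \<mu> * (\<Sum>y\<in>UNIV. m y * ?g y)"
    using sum_mass_Lap[OF G] by (simp add: sum_distrib_left algebra_simps)
  then have "K * energy w \<phi> \<le> \<mu> * energy w \<phi>"
    using sum_mass_Gam[OF G, of \<phi>] by simp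
  moreover have "0 < energy w \<phi>"
  proof -
    have eq: "\<mu> * ?N = energy w \<phi> / 2" by (rule eigenfunction_energy[OF G E])
    have N: "?N > 0" by (rule sum_mass_sq_pos[where \<phi>=\<phi> and a=a, OF G assms(4)])
    have "0 \<le> \<mu> * ?N" using eq energy_nonneg[OF G, of \<phi>] by simp
    then have "0 \<le> \<mu>" using N by (simp add: zero_le_mult_iff)
    then have "0 < \<mu> * ?N" using N \<open>\<mu> \<noteq> 0\<close> by simp
    then show ?thesis using eq by simp
  qed
  ultimately show ?thesis by simp
qed

lemma eigenfunction_K_vanishing_on_ball1:
  assumes G: "weighted_graph w m" and C: "connected_graph w" and CD: "CD_inf w m K"
    and E: "\<forall>y. - Lap w m \<phi> y = K * \<phi> y" and Z: "\<forall>y\<in>ball1 w x. \<phi> y = 0"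
  shows "\<phi> a = 0"
proof -
  let ?g = "Gam w m \<phi> \<phi>"
  have "Lap w m ?g y \<ge> 0" for y
    using CD[unfolded CD_inf_def, rule_format, of \<phi> y] Gam2_eigenfunction[OF E, of y] by linarith
  then have g_const: "?g y = ?g x" for y by (intro subharmonic_imp_const[OF G C] allI)
  have "?g x = 0"
    using Lap_cong_ball1[OF G, of x "\<lambda>z. (\<phi> z)\<^sup>2" "\<lambda>_. 0"] Z
    unfolding Gam_def Lap_def by (simp add: ball1_def power2_eq_square)
  then have "energy w \<phi> = 0" using sum_mass_Gam[OF G, of \<phi>] g_const by simp
  then have "\<phi> a = \<phi> x" by (rule energy_eq_0_imp_const[OF G C])
  then show ?thesis using Z unfolding ball1_def by simp
qed

section \<open>Spectral theory of the Laplacian\<close>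

text \<open>Functions on V are vectors in \<open>real^'v\<close>; the inner product of \<open>\<ell>\<^sup>2(V,m)\<close> is
  \<open>u \<bullet> mass_mult m v\<close>, and \<open>minus_Lap\<close> is \<open>-\<Delta>\<close>.\<close>

definition minus_Lap :: "('v::finite \<Rightarrow> 'v \<Rightarrow> real) \<Rightarrow> ('v \<Rightarrow> real) \<Rightarrow> real^'v \<Rightarrow> real^'v" where
  "minus_Lap w m v = (\<chi> y. - Lap w m (vec_nth v) y)"

definition mass_mult :: "('v::finite \<Rightarrow> real) \<Rightarrow> real^'v \<Rightarrow> real^'v" where
  "mass_mult m v = (\<chi> y. m y * v $ y)"

lemma linear_minus_Lap:
  fixes w :: "'v::finite \<Rightarrow> 'v \<Rightarrow> real"
  shows "linear (minus_Lap w m)"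
proof (rule linearI)
  fix u v :: "real^'v" and r
  have "vec_nth (u + v) = (\<lambda>y. u $ y + v $ y)" "vec_nth (r *\<^sub>R u) = (\<lambda>y. r * u $ y)" by auto
  then show "minus_Lap w m (u + v) = minus_Lap w m u + minus_Lap w m v"
    and "minus_Lap w m (r *\<^sub>R u) = r *\<^sub>R minus_Lap w m u"
    unfolding minus_Lap_def by (simp_all add: Lap_add Lap_cmult vec_eq_iff)
qed

lemma linear_mass_mult: "linear (mass_mult m)"
  by (rule linearI) (auto simp: mass_mult_def vec_eq_iff algebra_simps)

lemma inner_mass_mult: "u \<bullet> mass_mult m v = (\<Sum>y\<in>UNIV. m y * u $ y * v $ y)"
  unfolding inner_vec_def mass_mult_def by (simp add: algebra_simps)

lemma inner_mass_mult_commute: "u \<bullet> mass_mult m v = v \<bullet> mass_mult m u"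
  unfolding inner_mass_mult by (simp add: algebra_simps)

lemma inner_mass_mult_pos:
  assumes G: "weighted_graph w m" and "v \<noteq> 0"
  shows "v \<bullet> mass_mult m v > 0"
proof -
  obtain a where "v $ a \<noteq> 0" using assms(2) by (metis vec_eq_iff zero_index)
  then show ?thesis
    unfolding inner_mass_mult using sum_mass_sq_pos[where \<phi>="vec_nth v" and a=a, OF G]
    by (simp add: power2_eq_square mult.assoc)
qed

lemma minus_Lap_self_adjoint:
  assumes G: "weighted_graph w m"
  shows "minus_Lap w m u \<bullet> mass_mult m v = minus_Lap w m v \<bullet> mass_mult m u"
proof -
  have *: "minus_Lap w m u \<bullet> mass_mult m v
      = (\<Sum>y\<in>UNIV. \<Sum>z\<in>UNIV. w y z * (u $ z - u $ y) * (v $ z - v $ y)) / 2" for u v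
  proof -
    have "minus_Lap w m u \<bullet> mass_mult m v = - (\<Sum>y\<in>UNIV. m y * Lap w m (vec_nth u) y * v $ y)"
      unfolding inner_mass_mult minus_Lap_def by (simp add: sum_negf[symmetric] algebra_simps)
    then show ?thesis using green_formula[OF G, of "vec_nth u" "vec_nth v"] by simp
  qed
  show ?thesis unfolding * by (simp add: algebra_simps)
qed

lemma eigenvectors_mass_orthogonal:
  assumes G: "weighted_graph w m"
    and "minus_Lap w m a = \<mu> *\<^sub>R a" "minus_Lap w m b = \<nu> *\<^sub>R b" "\<mu> \<noteq> \<nu>"
  shows "a \<bullet> mass_mult m b = 0"
proof -
  have "\<mu> * (a \<bullet> mass_mult m b) = \<nu> * (a \<bullet> mass_mult m b)"
    using minus_Lap_self_adjoint[OF G, of a b] assms(2,3) inner_mass_mult_commute[of a m b] by simp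
  then show ?thesis using assms(4) by simp
qed

lemma mass_orthogonal_independent:
  assumes G: "weighted_graph w m" and "0 \<notin> B"
    and orth: "pairwise (\<lambda>a b. a \<bullet> mass_mult m b = 0) B"
  shows "independent B"
proof
  assume "dependent B"
  then obtain a where aB: "a \<in> B" and sp: "a \<in> span (B - {a})" unfolding dependent_def by blast
  have "subspace {x. x \<bullet> mass_mult m a = 0}"
    unfolding subspace_def by (auto simp: inner_add_left)
  moreover have "B - {a} \<subseteq> {x. x \<bullet> mass_mult m a = 0}"
    using orth aB unfolding pairwise_def by auto
  ultimately have "a \<bullet> mass_mult m a = 0" using sp span_minimal by blast
  moreover have "a \<noteq> 0" using \<open>0 \<notin> B\<close> aB by auto
  ultimately show False using inner_mass_mult_pos[OF G] by fastforce
qed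

lemma quadratic_nonpos_imp_linear_coeff_0:
  fixes a c :: real
  assumes "\<forall>t. 2 * t * a + t\<^sup>2 * c \<le> 0"
  shows "a = 0"
proof (rule ccontr)
  assume "a \<noteq> 0"
  define s where "s = 1 / (1 + \<bar>c\<bar>)"
  have s: "s > 0" "s * \<bar>c\<bar> < 1" unfolding s_def by (auto simp: field_simps)
  have "s * (- c) \<le> s * \<bar>c\<bar>" using s(1) by (intro mult_left_mono) auto
  then have "2 + s * c > 1" using s by linarith
  moreover have "a\<^sup>2 * s > 0" using \<open>a \<noteq> 0\<close> s by simp
  ultimately have "(a\<^sup>2 * s) * (2 + s * c) > 0" by (simp add: zero_less_mult_iff)
  moreover have "2 * (a * s) * a + (a * s)\<^sup>2 * c = (a\<^sup>2 * s) * (2 + s * c)"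
    by (simp add: power2_eq_square algebra_simps)
  ultimately show False using assms[rule_format, of "a * s"] by linarith
qed

lemma rayleigh_quotient_max_exists:
  assumes G: "weighted_graph w m" and S: "subspace S" and "u0 \<in> S" "u0 \<noteq> 0"
  obtains v0 lam where "v0 \<in> S" "v0 \<noteq> 0"
    "minus_Lap w m v0 \<bullet> mass_mult m v0 = lam * (v0 \<bullet> mass_mult m v0)"
    "\<And>u. u \<in> S \<Longrightarrow> minus_Lap w m u \<bullet> mass_mult m u \<le> lam * (u \<bullet> mass_mult m u)"
proof -
  define R where "R v = (minus_Lap w m v \<bullet> mass_mult m v) / (v \<bullet> mass_mult m v)" for v
  define T where "T = S \<inter> sphere 0 1"
  have T0: "v \<in> T \<Longrightarrow> v \<noteq> 0" for v unfolding T_def by auto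
  have "u0 /\<^sub>R norm u0 \<in> T"
    using assms(3,4) S unfolding T_def by (simp add: subspace_scale)
  then have "T \<noteq> {}" by blast
  moreover have "compact T"
    unfolding T_def using closed_subspace[OF S] by (simp add: closed_Int_compact)
  moreover have "continuous_on T R"
    unfolding R_def using linear_minus_Lap linear_mass_mult T0 inner_mass_mult_pos[OF G]
    by (intro continuous_on_divide continuous_on_inner continuous_on_id
        linear_continuous_on linear_conv_bounded_linear[THEN iffD1]) fastforce+
  ultimately obtain v0 where v0: "v0 \<in> T" "\<And>v. v \<in> T \<Longrightarrow> R v \<le> R v0"
    using continuous_attains_sup by metis
  have R_scale: "R (c *\<^sub>R v) = R v" if "c \<noteq> 0" for c v
    using that unfolding R_def linear_cmul[OF linear_minus_Lap] linear_cmul[OF linear_mass_mult]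
    by (simp add: power2_eq_square)
  have "minus_Lap w m u \<bullet> mass_mult m u \<le> R v0 * (u \<bullet> mass_mult m u)" if "u \<in> S" for u
  proof (cases "u = 0")
    case True
    then show ?thesis by (simp add: linear_0[OF linear_mass_mult])
  next
    case False
    then have "u /\<^sub>R norm u \<in> T" unfolding T_def using \<open>u \<in> S\<close> S by (simp add: subspace_scale)
    then have "R u \<le> R v0" using v0(2) R_scale[of "inverse (norm u)" u] False by fastforce
    then show ?thesis unfolding R_def using inner_mass_mult_pos[OF G False] by (simp add: divide_le_eq)
  qed
  moreover have "v0 \<in> S" "v0 \<noteq> 0" using v0(1) T0 unfolding T_def by auto
  moreover have "minus_Lap w m v0 \<bullet> mass_mult m v0 = R v0 * (v0 \<bullet> mass_mult m v0)"
    unfolding R_def using inner_mass_mult_pos[OF G \<open>v0 \<noteq> 0\<close>] by simp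
  ultimately show ?thesis using that by blast
qed

text \<open>At a maximiser of the Rayleigh quotient on an invariant subspace, perturbing in a direction
  \<open>u\<close> of the subspace yields a quadratic in the step size that is nonpositive with zero constant term;
  its vanishing linear term says that \<open>-\<Delta> v0 - lam v0\<close> is orthogonal to the subspace.\<close>

lemma rayleigh_quotient_max_eigenvector:
  assumes G: "weighted_graph w m" and S: "subspace S" and inv: "\<forall>v\<in>S. minus_Lap w m v \<in> S"
    and "v0 \<in> S" and at_v0: "minus_Lap w m v0 \<bullet> mass_mult m v0 = lam * (v0 \<bullet> mass_mult m v0)"
    and max: "\<And>u. u \<in> S \<Longrightarrow> minus_Lap w m u \<bullet> mass_mult m u \<le> lam * (u \<bullet> mass_mult m u)"
  shows "minus_Lap w m v0 = lam *\<^sub>R v0"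
proof -
  let ?L = "minus_Lap w m" and ?M = "mass_mult m"
  have stationary: "?L v0 \<bullet> ?M u - lam * (v0 \<bullet> ?M u) = 0" if "u \<in> S" for u
  proof (rule quadratic_nonpos_imp_linear_coeff_0, intro allI)
    fix t
    have "v0 + t *\<^sub>R u \<in> S" using S \<open>v0 \<in> S\<close> \<open>u \<in> S\<close> by (simp add: subspace_add subspace_scale)
    then have "?L (v0 + t *\<^sub>R u) \<bullet> ?M (v0 + t *\<^sub>R u) \<le> lam * ((v0 + t *\<^sub>R u) \<bullet> ?M (v0 + t *\<^sub>R u))"
      by (rule max)
    then show "2 * t * (?L v0 \<bullet> ?M u - lam * (v0 \<bullet> ?M u)) + t\<^sup>2 * (?L u \<bullet> ?M u - lam * (u \<bullet> ?M u)) \<le> 0"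
      using at_v0 minus_Lap_self_adjoint[OF G, of u v0] inner_mass_mult_commute[of u m v0]
      unfolding linear_add[OF linear_minus_Lap] linear_add[OF linear_mass_mult]
        linear_cmul[OF linear_minus_Lap] linear_cmul[OF linear_mass_mult]
      by (simp add: inner_add_left inner_add_right power2_eq_square algebra_simps)
  qed
  define u where "u = ?L v0 - lam *\<^sub>R v0"
  have "u \<in> S" unfolding u_def using S inv \<open>v0 \<in> S\<close> by (simp add: subspace_diff subspace_scale)
  then have "u \<bullet> ?M u = 0" using stationary unfolding u_def by (simp add: inner_diff_left)
  then have "u = 0" using inner_mass_mult_pos[OF G, of u] by fastforce
  then show ?thesis unfolding u_def by simp
qed

lemma invariant_subspace_has_eigenvector:
  assumes G: "weighted_graph w m" and S: "subspace S" and inv: "\<forall>v\<in>S. minus_Lap w m v \<in> S"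
    and "a \<in> S" "a \<noteq> 0"
  obtains v lam where "v \<in> S" "v \<noteq> 0" "minus_Lap w m v = lam *\<^sub>R v"
proof -
  obtain v lam where "v \<in> S" "v \<noteq> 0"
    and "minus_Lap w m v \<bullet> mass_mult m v = lam * (v \<bullet> mass_mult m v)"
    and "\<And>u. u \<in> S \<Longrightarrow> minus_Lap w m u \<bullet> mass_mult m u \<le> lam * (u \<bullet> mass_mult m u)"
    using rayleigh_quotient_max_exists[OF G S \<open>a \<in> S\<close> \<open>a \<noteq> 0\<close>] by blast
  then show ?thesis using rayleigh_quotient_max_eigenvector[OF G S inv] that by blast
qed

lemma minus_Lap_preserves_mass_orthogonal_complement:
  assumes G: "weighted_graph w m" and eig: "\<forall>b\<in>B. \<exists>c. minus_Lap w m b = c *\<^sub>R b"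
    and "\<forall>b\<in>B. v \<bullet> mass_mult m b = 0"
  shows "\<forall>b\<in>B. minus_Lap w m v \<bullet> mass_mult m b = 0"
proof
  fix b assume "b \<in> B"
  then obtain c where "minus_Lap w m b = c *\<^sub>R b" using eig by blast
  moreover have "b \<bullet> mass_mult m v = 0"
    using assms(3) \<open>b \<in> B\<close> inner_mass_mult_commute[of b m v] by simp
  ultimately show "minus_Lap w m v \<bullet> mass_mult m b = 0"
    using minus_Lap_self_adjoint[OF G, of v b] by simp
qed

lemma exists_nonzero_mass_orthogonal:
  fixes B :: "(real^'v::finite) set"
  assumes "finite B" and "card B < CARD('v)"
  obtains a where "a \<noteq> 0" "\<forall>b\<in>B. a \<bullet> mass_mult m b = 0"
proof -
  have "dim (mass_mult m ` B) \<le> card (mass_mult m ` B)" by (rule dim_le_card') (simp add: assms(1))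
  also have "\<dots> \<le> card B" using card_image_le[OF assms(1)] .
  finally have "span (mass_mult m ` B) \<noteq> UNIV"
    using assms(2) by (metis dim_UNIV dim_span DIM_cart DIM_real mult_1_right not_le)
  then obtain a where "a \<noteq> 0" "\<forall>x\<in>span (mass_mult m ` B). a \<bullet> x = 0"
    using span_not_UNIV_orthogonal by blast
  then show ?thesis using that by (simp add: span_base)
qed

lemma exists_mass_orthogonal_eigenvectors:
  fixes w :: "'v::finite \<Rightarrow> 'v \<Rightarrow> real"
  assumes G: "weighted_graph w m" and "k \<le> CARD('v)"
  shows "\<exists>B. finite B \<and> card B = k \<and> 0 \<notin> B \<and> (\<forall>b\<in>B. \<exists>c. minus_Lap w m b = c *\<^sub>R b)
           \<and> pairwise (\<lambda>a b. a \<bullet> mass_mult m b = 0) B"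
  using \<open>k \<le> CARD('v)\<close>
proof (induction k)
  case 0
  show ?case by (intro exI[of _ "{}"]) auto
next
  case (Suc k)
  then obtain B where B: "finite B" "card B = k" "0 \<notin> B" "\<forall>b\<in>B. \<exists>c. minus_Lap w m b = c *\<^sub>R b"
    "pairwise (\<lambda>a b. a \<bullet> mass_mult m b = 0) B"
    by auto
  define S where "S = {v. \<forall>b\<in>B. v \<bullet> mass_mult m b = 0}"
  have S: "subspace S" unfolding S_def subspace_def by (auto simp: inner_add_left)
  have inv: "\<forall>v\<in>S. minus_Lap w m v \<in> S"
    using minus_Lap_preserves_mass_orthogonal_complement[OF G B(4)] unfolding S_def by blast
  obtain a where "a \<in> S" "a \<noteq> 0"
    using exists_nonzero_mass_orthogonal[OF B(1), of m] B(2) Suc.prems unfolding S_def by auto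
  then obtain v lam where v: "v \<in> S" "v \<noteq> 0" "minus_Lap w m v = lam *\<^sub>R v"
    using invariant_subspace_has_eigenvector[OF G S inv] by blast
  have "v \<notin> B" using v inner_mass_mult_pos[OF G] unfolding S_def by fastforce
  show ?case
  proof (intro exI[of _ "insert v B"] conjI)
    show "finite (insert v B)" using B(1) by simp
    show "card (insert v B) = Suc k" using B(1,2) \<open>v \<notin> B\<close> by simp
    show "0 \<notin> insert v B" using B(3) v(2) by simp
    show "\<forall>b\<in>insert v B. \<exists>c. minus_Lap w m b = c *\<^sub>R b" using B(4) v(3) by blast
    have "v \<bullet> mass_mult m b = 0" "b \<bullet> mass_mult m v = 0" if "b \<in> B" for b
      using v(1) that inner_mass_mult_commute[of b m v] unfolding S_def by simp_all
    then show "pairwise (\<lambda>a b. a \<bullet> mass_mult m b = 0) (insert v B)"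
      using B(5) by (simp add: pairwise_insert)
  qed
qed

lemma eigspace_minus_Lap: "eigspace w m \<mu> = {v. minus_Lap w m v = \<mu> *\<^sub>R v}"
  unfolding eigspace_def minus_Lap_def by (auto simp: vec_eq_iff)

lemma subspace_eigspace: "subspace (eigspace w m \<mu>)"
  unfolding eigspace_minus_Lap subspace_def
  by (simp add: linear_0[OF linear_minus_Lap] linear_add[OF linear_minus_Lap]
      linear_cmul[OF linear_minus_Lap] scaleR_right_distrib)

lemma is_eigenvalue_iff_minus_Lap:
  "is_eigenvalue w m \<mu> \<longleftrightarrow> (\<exists>v. v \<noteq> 0 \<and> minus_Lap w m v = \<mu> *\<^sub>R v)"
proof
  assume "is_eigenvalue w m \<mu>"
  then obtain f where f: "f \<noteq> (\<lambda>_. 0)" "\<forall>x. - Lap w m f x = \<mu> * f x"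
    unfolding is_eigenvalue_def by blast
  have nth: "vec_nth (vec_lambda f) = f" by (simp add: fun_eq_iff)
  have "vec_lambda f \<noteq> 0" using f(1) by (auto simp: vec_eq_iff fun_eq_iff)
  moreover have "minus_Lap w m (vec_lambda f) = \<mu> *\<^sub>R vec_lambda f"
    unfolding minus_Lap_def nth using f(2) by (simp add: vec_eq_iff)
  ultimately show "\<exists>v. v \<noteq> 0 \<and> minus_Lap w m v = \<mu> *\<^sub>R v" by blast
next
  assume "\<exists>v. v \<noteq> 0 \<and> minus_Lap w m v = \<mu> *\<^sub>R v"
  then obtain v where "v \<noteq> 0" "minus_Lap w m v = \<mu> *\<^sub>R v" by blast
  then show "is_eigenvalue w m \<mu>"
    unfolding is_eigenvalue_def minus_Lap_def
    by (intro exI[of _ "vec_nth v"]) (auto simp: vec_eq_iff fun_eq_iff)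
qed

lemma finite_eigenvalues:
  fixes w :: "'v::finite \<Rightarrow> 'v \<Rightarrow> real"
  assumes G: "weighted_graph w m"
  shows "finite {\<mu>. is_eigenvalue w m \<mu>}"
proof -
  have "card F \<le> CARD('v)" if F: "F \<subseteq> {\<mu>. is_eigenvalue w m \<mu>}" "finite F" for F
  proof -
    define e where "e \<mu> = (SOME v. v \<noteq> 0 \<and> minus_Lap w m v = \<mu> *\<^sub>R v)" for \<mu>
    have e: "e \<mu> \<noteq> 0 \<and> minus_Lap w m (e \<mu>) = \<mu> *\<^sub>R e \<mu>" if "\<mu> \<in> F" for \<mu>
      unfolding e_def by (rule someI_ex) (use F that is_eigenvalue_iff_minus_Lap in blast)
    have "inj_on e F"
      by (rule inj_onI) (metis e scaleR_cancel_right)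
    moreover have "independent (e ` F)"
      using e by (intro mass_orthogonal_independent[OF G])
        (auto simp: pairwise_def intro: eigenvectors_mass_orthogonal[OF G])
    then have "card (e ` F) \<le> CARD('v)"
      using independent_card_le_dim[of "e ` F" UNIV] by (simp add: dim_UNIV)
    ultimately show ?thesis by (simp add: card_image)
  qed
  then show ?thesis using finite_if_finite_subsets_card_bdd by blast
qed

text \<open>The weak form of the spectral theorem needed to make \<open>eigval w m (deg w x)\<close> a genuine
  eigenvalue rather than an out-of-range list index.\<close>

lemma card_le_size_eig_mset:
  fixes w :: "'v::finite \<Rightarrow> 'v \<Rightarrow> real"
  assumes G: "weighted_graph w m"
  shows "CARD('v) \<le> size (eig_mset w m)"
proof -
  let ?Ev = "{\<mu>. is_eigenvalue w m \<mu>}"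
  obtain B where B: "finite B" "card B = CARD('v)" "0 \<notin> B"
    "\<forall>b\<in>B. \<exists>c. minus_Lap w m b = c *\<^sub>R b" "pairwise (\<lambda>a b. a \<bullet> mass_mult m b = 0) B"
    using exists_mass_orthogonal_eigenvectors[OF G, of "CARD('v)"] by auto
  define B\<^sub>\<mu> where "B\<^sub>\<mu> \<mu> = {b\<in>B. minus_Lap w m b = \<mu> *\<^sub>R b}" for \<mu>
  have "B \<subseteq> (\<Union>\<mu>\<in>?Ev. B\<^sub>\<mu> \<mu>)"
  proof
    fix b assume "b \<in> B"
    then obtain c where "minus_Lap w m b = c *\<^sub>R b" using B(4) by blast
    moreover have "b \<noteq> 0" using B(3) \<open>b \<in> B\<close> by blast
    ultimately show "b \<in> (\<Union>\<mu>\<in>?Ev. B\<^sub>\<mu> \<mu>)"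
      using \<open>b \<in> B\<close> is_eigenvalue_iff_minus_Lap unfolding B\<^sub>\<mu>_def by blast
  qed
  then have "card B \<le> card (\<Union>\<mu>\<in>?Ev. B\<^sub>\<mu> \<mu>)"
    by (rule card_mono[rotated]) (use finite_eigenvalues[OF G] B(1) in \<open>auto simp: B\<^sub>\<mu>_def\<close>)
  also have "\<dots> \<le> (\<Sum>\<mu>\<in>?Ev. card (B\<^sub>\<mu> \<mu>))"
    by (rule card_UN_le[OF finite_eigenvalues[OF G]])
  also have "\<dots> \<le> (\<Sum>\<mu>\<in>?Ev. dim (eigspace w m \<mu>))"
  proof (rule sum_mono)
    fix \<mu>
    have "independent (B\<^sub>\<mu> \<mu>)"
        using B(3,5) unfolding B\<^sub>\<mu>_def
      by (intro mass_orthogonal_independent[OF G]) (auto simp: pairwise_def)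
    moreover have "B\<^sub>\<mu> \<mu> \<subseteq> eigspace w m \<mu>" unfolding B\<^sub>\<mu>_def eigspace_minus_Lap by auto
    ultimately show "card (B\<^sub>\<mu> \<mu>) \<le> dim (eigspace w m \<mu>)" using independent_card_le_dim by blast
  qed
  also have "\<dots> = size (eig_mset w m)" unfolding eig_mset_def by (simp add: size_multiset_sum)
  finally show ?thesis using B(2) by simp
qed

lemma count_eig_mset:
  assumes G: "weighted_graph w m"
  shows "count (eig_mset w m) \<mu> = (if is_eigenvalue w m \<mu> then dim (eigspace w m \<mu>) else 0)"
  unfolding eig_mset_def count_sum
  using sum.delta'[OF finite_eigenvalues[OF G], of \<mu> "\<lambda>\<nu>. dim (eigspace w m \<nu>)"] by simp

lemma dim_eigspace_0_le_1:
  fixes w :: "'v::finite \<Rightarrow> 'v \<Rightarrow> real"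
  assumes G: "weighted_graph w m" and C: "connected_graph w"
  shows "dim (eigspace w m 0) \<le> 1"
proof -
  let ?one = "(\<chi> y. 1) :: real^'v"
  have "eigspace w m 0 \<subseteq> span {?one}"
  proof
    fix v assume "v \<in> eigspace w m 0"
    then have "v $ y = v $ undefined" for y
      by (intro harmonic_imp_const[OF G C]) (simp add: eigspace_def)
    then have "v = (v $ undefined) *\<^sub>R ?one" by (auto simp: vec_eq_iff)
    then show "v \<in> span {?one}" by (metis span_base span_scale singletonI)
  qed
  then show ?thesis using dim_le_card[of "eigspace w m 0" "{?one}"] by simp
qed

lemma eigenvalue_eq_0_or_ge:
  assumes G: "weighted_graph w m" and CD: "CD_inf w m K" and "is_eigenvalue w m \<mu>"
  shows "\<mu> = 0 \<or> K \<le> \<mu>"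
proof -
  obtain f a where "\<forall>x. - Lap w m f x = \<mu> * f x" "f a \<noteq> 0"
    using \<open>is_eigenvalue w m \<mu>\<close> unfolding is_eigenvalue_def by (metis ext)
  then show ?thesis using lichnerowicz[OF G CD] by blast
qed

lemma Suc_le_size_filter_mset_le_sorted_nth:
  fixes M :: "'a::linorder multiset"
  assumes "d < size M"
  shows "Suc d \<le> size (filter_mset (\<lambda>y. y \<le> sorted_list_of_multiset M ! d) M)"
proof -
  let ?s = "sorted_list_of_multiset M" and ?P = "\<lambda>y. y \<le> sorted_list_of_multiset M ! d"
  have len: "d < length ?s" using assms by (metis mset_sorted_list_of_multiset size_mset)
  have "?s ! i \<le> ?s ! d" if "i \<le> d" for i
    using sorted_nth_mono[OF sorted_sorted_list_of_multiset that len] .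
  then have "\<forall>y\<in>set (take (Suc d) ?s). ?P y" by (auto simp: in_set_conv_nth)
  then have "filter ?P (take (Suc d) ?s) = take (Suc d) ?s" by (rule filter_True)
  moreover have "filter ?P ?s = filter ?P (take (Suc d) ?s) @ filter ?P (drop (Suc d) ?s)"
    by (metis append_take_drop_id filter_append)
  ultimately have "Suc d \<le> length (filter ?P ?s)" using len by simp
  also have "\<dots> = size (filter_mset ?P M)"
    by (metis mset_filter mset_sorted_list_of_multiset size_mset)
  finally show ?thesis .
qed

lemma deg_le_dim_eigspace:
  fixes w :: "'v::finite \<Rightarrow> 'v \<Rightarrow> real"
  assumes G: "weighted_graph w m" and C: "connected_graph w" and "K > 0" and CD: "CD_inf w m K"
    and "eigval w m (deg w x) = K"
  shows "deg w x \<le> dim (eigspace w m K)"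
proof -
  let ?M = "eig_mset w m"
  have "deg w x < size ?M"
    using card_le_size_eig_mset[OF G] deg_less_card[OF G, of x] by linarith
  then have "Suc (deg w x) \<le> size (filter_mset (\<lambda>y. y \<le> K) ?M)"
    using Suc_le_size_filter_mset_le_sorted_nth \<open>eigval w m (deg w x) = K\<close>
    unfolding eigval_def by metis
  also have "\<dots> \<le> size (replicate_mset (count ?M K) K + replicate_mset (count ?M 0) 0)"
  proof (intro size_mset_mono mset_subset_eqI)
    fix y
    show "count (filter_mset (\<lambda>y. y \<le> K) ?M) y
        \<le> count (replicate_mset (count ?M K) K + replicate_mset (count ?M 0) 0) y"
    proof (cases "y \<le> K \<and> count ?M y > 0")
      case True
      then have "is_eigenvalue w m y" using count_eig_mset[OF G, of y] by (metis less_irrefl)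
      then have "y = 0 \<or> y = K" using eigenvalue_eq_0_or_ge[OF G CD] True by force
      then show ?thesis using \<open>K > 0\<close> by auto
    qed (auto simp: count_eq_zero_iff)
  qed
  also have "\<dots> = count ?M K + count ?M 0" by simp
  finally show ?thesis
    using count_eig_mset[OF G, of K] count_eig_mset[OF G, of 0] dim_eigspace_0_le_1[OF G C]
    by (simp split: if_splits)
qed

section \<open>Restriction of eigenfunctions to a unit ball\<close>

definition vec_restrict :: "'v set \<Rightarrow> real^'v \<Rightarrow> real^'v" where
  "vec_restrict A v = (\<chi> y. if y \<in> A then v $ y else 0)"

definition local_eigspace :: "('v::finite \<Rightarrow> 'v \<Rightarrow> real) \<Rightarrow> ('v \<Rightarrow> real) \<Rightarrow> real \<Rightarrow> 'v \<Rightarrow> (real^'v) set"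
  where "local_eigspace w m K x =
    {g. (\<forall>y. y \<notin> ball1 w x \<longrightarrow> g $ y = 0) \<and> Lap w m (vec_nth g) x = - K * g $ x}"

lemma vec_restrict_eq_iff: "vec_restrict A a = vec_restrict A b \<longleftrightarrow> (\<forall>y\<in>A. a $ y = b $ y)"
  unfolding vec_restrict_def by (auto simp: vec_eq_iff)

lemma linear_vec_restrict: "linear (vec_restrict A)"
  unfolding vec_restrict_def by (rule linearI) (auto simp: vec_eq_iff)

lemma subspace_local_eigspace: "subspace (local_eigspace w m K x)"
proof -
  have nth: "vec_nth (a + b) = (\<lambda>y. a $ y + b $ y)" "vec_nth (c *\<^sub>R a) = (\<lambda>y. c * a $ y)"
    "vec_nth (0 :: real^'a) = (\<lambda>_. 0)" for a b :: "real^'a" and c by auto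
  have "Lap w m (\<lambda>_. 0) x = 0" by (simp add: Lap_def)
  show ?thesis
    unfolding subspace_def local_eigspace_def by (auto simp: nth \<open>Lap w m (\<lambda>_. 0) x = 0\<close> Lap_add Lap_cmult algebra_simps)
qed

lemma dim_local_eigspace_le_deg:
  fixes w :: "'v::finite \<Rightarrow> 'v \<Rightarrow> real"
  assumes G: "weighted_graph w m" and "K \<noteq> 0"
  shows "dim (local_eigspace w m K x) \<le> deg w x"
proof -
  define U :: "(real^'v) set" where "U = {g. \<forall>y. y \<notin> ball1 w x \<longrightarrow> g $ y = 0}"
  have "dim U = Suc (deg w x)"
    unfolding U_def using dim_substandard_cart[where 'a=real, of "ball1 w x"] card_ball1[OF G, of x]
    by (simp add: dim_vec_eq)
  moreover have "local_eigspace w m K x \<subset> U"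
  proof -
    obtain e where "e \<in> U" "Lap w m (vec_nth e) x \<noteq> - K * e $ x"
    proof (cases "\<exists>y. adj w y x")
      case True
      then obtain y where "adj w y x" by blast
      then have "y \<noteq> x" "w x y > 0" "y \<in> ball1 w x"
        using weight_diag[OF G, of x] weight_sym[OF G] unfolding adj_def ball1_def by auto
      moreover have "(\<Sum>z\<in>UNIV. w x z * (axis y 1 $ z - axis y 1 $ x)) = (\<Sum>z\<in>UNIV. if z = y then w x z else 0)"
        using \<open>y \<noteq> x\<close> by (intro sum.cong) (auto simp: axis_def)
      then have "Lap w m (vec_nth (axis y 1)) x = w x y / m x" unfolding Lap_def by simp
      ultimately show ?thesis
        using that[of "axis y 1"] mass_pos[OF G, of x] by (simp add: U_def axis_def)
    next
      case False
      then have "w x y = 0" for y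
        using weight_nonneg[OF G, of x y] weight_sym[OF G, of x y] unfolding adj_def by (metis less_eq_real_def)
      then have "Lap w m (vec_nth (axis x 1)) x = 0" unfolding Lap_def by simp
      then show ?thesis using that[of "axis x 1"] \<open>K \<noteq> 0\<close> by (simp add: U_def ball1_def axis_def)
    qed
    then show ?thesis unfolding U_def local_eigspace_def by auto
  qed
  moreover have "subspace U" unfolding U_def subspace_def by auto
  ultimately have "dim (local_eigspace w m K x) < Suc (deg w x)"
    using subspace_local_eigspace by (metis dim_psubset span_eq_iff)
  then show ?thesis by simp
qed

lemma vec_restrict_eigspace_subset:
  assumes G: "weighted_graph w m"
  shows "vec_restrict (ball1 w x) ` eigspace w m K \<subseteq> local_eigspace w m K x"
proof
  fix g assume "g \<in> vec_restrict (ball1 w x) ` eigspace w m K"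
  then obtain v where v: "v \<in> eigspace w m K" and g: "g = vec_restrict (ball1 w x) v" by blast
  have "x \<in> ball1 w x" unfolding ball1_def by simp
  moreover have "Lap w m (vec_nth g) x = Lap w m (vec_nth v) x"
    using g by (intro Lap_cong_ball1[OF G]) (simp add: vec_restrict_def)
  ultimately show "g \<in> local_eigspace w m K x"
    using v g unfolding eigspace_def local_eigspace_def vec_restrict_def
    by (simp add: minus_equation_iff)
qed

lemma inj_on_vec_restrict_eigspace:
  assumes G: "weighted_graph w m" and C: "connected_graph w" and CD: "CD_inf w m K"
  shows "inj_on (vec_restrict (ball1 w x)) (eigspace w m K)"
proof (rule inj_onI)
  fix a b
  assume "a \<in> eigspace w m K" "b \<in> eigspace w m K"
    and eq: "vec_restrict (ball1 w x) a = vec_restrict (ball1 w x) b"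
  then have "a - b \<in> eigspace w m K" by (simp add: subspace_diff subspace_eigspace)
  moreover have "\<forall>y\<in>ball1 w x. (a - b) $ y = 0"
    using eq by (simp add: vec_restrict_eq_iff)
  ultimately have "(a - b) $ y = 0" for y
    by (intro eigenfunction_K_vanishing_on_ball1[OF G C CD, of "vec_nth (a - b)" x])
      (auto simp: eigspace_def)
  then show "a = b" by (simp add: vec_eq_iff)
qed

lemma vec_restrict_eigspace_eq_local_eigspace:
  fixes w :: "'v::finite \<Rightarrow> 'v \<Rightarrow> real"
  assumes G: "weighted_graph w m" and C: "connected_graph w" and "K > 0" and CD: "CD_inf w m K"
    and "eigval w m (deg w x) = K"
  shows "vec_restrict (ball1 w x) ` eigspace w m K = local_eigspace w m K x"
proof -
  let ?R = "vec_restrict (ball1 w x)" and ?E = "eigspace w m K"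
  have "dim (?R ` ?E) = dim ?E"
    using inj_on_vec_restrict_eigspace[OF G C CD]
    by (intro dim_image_eq[OF linear_vec_restrict])
      (simp add: span_eq_iff[THEN iffD2, OF subspace_eigspace])
  also have "\<dots> \<ge> dim (local_eigspace w m K x)"
    using deg_le_dim_eigspace[OF assms] dim_local_eigspace_le_deg[OF G, of K x] \<open>K > 0\<close> by simp
  finally have "span (?R ` ?E) = span (local_eigspace w m K x)"
    using dim_eq_span[OF vec_restrict_eigspace_subset[OF G]] by simp
  then show ?thesis
    using linear_subspace_image[OF linear_vec_restrict subspace_eigspace] subspace_local_eigspace
    by (metis span_eq_iff)
qed

theorem lemma3:
  fixes w :: "'v::finite \<Rightarrow> 'v \<Rightarrow> real" and m :: "'v \<Rightarrow> real"
    and K :: real and x :: 'v and f :: "'v \<Rightarrow> real"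
  assumes "weighted_graph w m"
    and "connected_graph w"
    and "K > 0"
    and "CD_inf w m K"
    and "eigval w m (deg w x) = K"
    and "Lap w m f x = - K * f x"
  shows "\<exists>\<phi>. (\<forall>y. - Lap w m \<phi> y = K * \<phi> y) \<and> (\<forall>y\<in>ball1 w x. \<phi> y = f y)"
proof -
  let ?R = "vec_restrict (ball1 w x)"
  have "x \<in> ball1 w x" unfolding ball1_def by simp
  then have "?R (vec_lambda f) \<in> local_eigspace w m K x"
    using Lap_cong_ball1[OF assms(1), of x "vec_nth (?R (vec_lambda f))" f] assms(6)
    by (auto simp: local_eigspace_def vec_restrict_def)
  then obtain v where "v \<in> eigspace w m K" "?R v = ?R (vec_lambda f)"
    using vec_restrict_eigspace_eq_local_eigspace[OF assms(1-5)] by (metis imageE)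
  then have "\<forall>y. - Lap w m (vec_nth v) y = K * v $ y" "\<forall>y\<in>ball1 w x. v $ y = f y"
    by (simp_all add: eigspace_def vec_restrict_eq_iff)
  then show ?thesis by blast
qed

end
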